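(* Let $\mu$ be a positive even integer, $h>0$, $t\ge 0$, and for $K\in\mathbb{N}$ and $k\in\{1,\dots,K-1\}$ define $$F_\mu(t,h,k,K)=\left(\frac{k!\,(K-k)!}{\prod_{\kappa=1}^K(K-k+\kappa)+(K+1)^K\left(\frac{t}{h}\right)^K}\right)^{\mu}.$$ Then for every $K\in\mathbb{N}$ and every $k=1,\dots,K-1$, $$F_\mu(t,h,k,K)\le F_\mu(t,h,K-1,K).$$ *)

theory Defs
  imports Complex_Main
begin

definition F_mu :: "nat \<Rightarrow> real \<Rightarrow> real \<Rightarrow> nat \<Rightarrow> nat \<Rightarrow> real" where
  "F_mu \<mu> t h k K =
     (fact k * fact (K - k) /
       ((\<Prod>\<kappa>=1..K. real (K - k + \<kappa>)) + (real K + 1) ^ K * (t / h) ^ K)) ^ \<mu>"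

end

theory Submission
  imports Defs
begin

text \<open>Write \<open>m = K - k\<close>. The denominator product equals \<open>(m + K)! / m!\<close>, so the base of
  \<open>F_mu\<close> at \<open>k\<close> is \<open>k! m! / ((m + K)!/m! + C)\<close> with \<open>0 \<le> C\<close>, and at \<open>k = K - 1\<close> it is
  \<open>(K - 1)! / ((K + 1)! + C)\<close>. Comparing \<open>a / (b + C)\<close> with \<open>A / (B + C)\<close> for every \<open>0 \<le> C\<close>
  only requires \<open>a \<le> A\<close> and \<open>a B \<le> A b\<close>, and both follow from the single factorial
  inequality \<open>i! j! \<le> (i + j - 1)!\<close> for \<open>i, j \<ge> 1\<close>.\<close>

lemma prod_of_nat_add_eq_fact_div:
  "(\<Prod>\<kappa>=1..n. of_nat (m + \<kappa>)) = (fact (m + n) / fact m :: 'a :: field_char_0)"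
proof (induction n)
  case 0
  then show ?case by simp
next
  case (Suc n)
  have "(\<Prod>\<kappa>=1..Suc n. of_nat (m + \<kappa>)) = (fact (m + n) / fact m) * (of_nat (Suc (m + n)) :: 'a)"
    using Suc by (simp add: prod.nat_ivl_Suc')
  also have "\<dots> = fact (m + Suc n) / fact m"
    by (simp add: algebra_simps)
  finally show ?case .
qed

lemma fact_mult_fact_le:
  assumes "1 \<le> i" and "1 \<le> j"
  shows "fact i * fact j \<le> (fact (i + j - 1) :: 'a :: linordered_semidom)"
proof -
  have "fact i * fact (Suc n) \<le> (fact (i + n) :: 'a)" for n
  proof (induction n)
    case 0
    then show ?case by simp
  next
    case (Suc n)
    have "fact i * fact (Suc (Suc n)) = of_nat (Suc (Suc n)) * (fact i * fact (Suc n) :: 'a)"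
      by (simp only: fact_Suc[of "Suc n"] mult_ac)
    also have "\<dots> \<le> of_nat (Suc (i + n)) * fact (i + n)"
      using Suc assms(1) by (intro mult_mono) auto
    also have "\<dots> = fact (i + Suc n)"
      by simp
    finally show ?case .
  qed
  from this[of "j - 1"] show ?thesis
    using assms by simp
qed

lemma divide_add_le_divide_add:
  fixes a b A B C :: "'a :: linordered_field"
  assumes "a \<le> A" and "a * B \<le> A * b" and "0 < b" and "0 < B" and "0 \<le> C"
  shows "a / (b + C) \<le> A / (B + C)"
proof -
  have "C * a \<le> C * A"
    using assms(1,5) by (rule mult_left_mono)
  then have "a * (B + C) \<le> A * (b + C)"
    using assms(2) by (simp add: algebra_simps)
  then show ?thesis
    using assms(3-5) by (simp add: divide_simps)
qed

lemma fact_ratio_le_last: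
  assumes "1 \<le> k" and "k < K" and "0 \<le> (C :: real)"
  shows "fact k * fact (K - k) / (fact (2 * K - k) / fact (K - k) + C)
    \<le> fact (K - 1) / (fact (K + 1) + C)"
proof -
  define m where "m = K - k"
  have m: "1 \<le> m" "k + m - 1 = K - 1" "m + (K + 1) - 1 = 2 * K - k"
    using assms unfolding m_def by auto
  have num: "fact k * fact m \<le> (fact (K - 1) :: real)"
    using fact_mult_fact_le[OF assms(1) m(1)] m(2) by simp
  have "fact m * fact (K + 1) \<le> (fact (2 * K - k) :: real)"
    using fact_mult_fact_le[OF m(1), of "K + 1"] m(3) by simp
  with num have "(fact k * fact m) * (fact m * fact (K + 1)) \<le> (fact (K - 1) * fact (2 * K - k) :: real)"
    by (intro mult_mono) simp_all
  then have cross: "fact k * fact m * fact (K + 1) \<le> fact (K - 1) * (fact (2 * K - k) / fact m :: real)"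
    by (simp add: le_divide_eq mult_ac)
  from divide_add_le_divide_add[OF num cross _ _ assms(3)] show ?thesis
    unfolding m_def by simp
qed

theorem proposition1:
  fixes \<mu> K k :: nat and t h :: real
  assumes "\<mu> > 0" and "even \<mu>" and "h > 0" and "t \<ge> 0"
    and "1 \<le> k" and "k \<le> K - 1"
  shows "F_mu \<mu> t h k K \<le> F_mu \<mu> t h (K - 1) K"
proof -
  have "k < K" and last: "K - (K - 1) = 1"
    using assms(5,6) by auto
  define C where "C = (real K + 1) ^ K * (t / h) ^ K"
  have "0 \<le> C"
    unfolding C_def using assms(3,4) by simp
  have "K - k + K = 2 * K - k"
    using \<open>k < K\<close> by simp
  note prod_k = prod_of_nat_add_eq_fact_div[of "K - k" K, unfolded this]
  have prod_last: "(\<Prod>\<kappa>=1..K. real (1 + \<kappa>)) = fact (K + 1)"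
    using prod_of_nat_add_eq_fact_div[of 1 K] by (simp add: add.commute)
  have "(fact k * fact (K - k) / (fact (2 * K - k) / fact (K - k) + C)) ^ \<mu>
      \<le> (fact (K - 1) / (fact (K + 1) + C) :: real) ^ \<mu>"
    \<comment> \<open>the bases are nonnegative\<close>
    using fact_ratio_le_last[OF assms(5) \<open>k < K\<close> \<open>0 \<le> C\<close>] \<open>0 \<le> C\<close>
    by (intro power_mono) auto
  then show ?thesis
    unfolding F_mu_def prod_k prod_last last C_def[symmetric] by simp
qed

end
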